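(* Let $p$ be an odd prime, $n\ge 2$, $N$ a positive integer, and $(\mathbf J,\mathbf B,\mathbf C)\in\mathbb{Z}_p^{n(n-1)/2+2n}$. Then $$Z_n(\mathbf J,\mathbf B,\mathbf C;p)=C_n'\,Z_{n-1}(\mathbf J',\mathbf B^+,\mathbf C^+;p)+B_n'\,Z_{n-1}(\mathbf J',\mathbf B^-,\mathbf C^-;p)$$ in $\mathbb{Z}_p$, where $\mathbf J'\in\mathbb{Z}_p^{(n-1)(n-2)/2}$ has $J'_{ij}=J_{ij}$ for $1\le i<j\le n-1$; $\mathbf B^\pm,\mathbf C^\pm\in\mathbb{Z}_p^{n-1}$ are given for $1\le i\le n-1$ by $B^+_i=2^{-N}B_iJ_{in}$, $B^-_i=B_i$, $C^+_i=C_i$, $C^-_i=2^{-N}C_iJ_{in}$; and $C_n'=C_n2^{(n-2)N}$, $B_n'=B_n2^{(n-2)N}$.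
   Context: All arithmetic is in $\mathbb{Z}_p$, and $2^{-N}$ denotes $g^N$ where $g$ is the multiplicative inverse of $2$ modulo $p$. For $m\ge1$ and $\boldsymbol\sigma\in\{-1,1\}^m$, let $I_m(\boldsymbol\sigma)=|\{(i,j):1\le i<j\le m,\ \sigma_i\ne\sigma_j\}|$ and $f(m,\boldsymbol\sigma)=\frac{m(m-1)}{2}-m-I_m(\boldsymbol\sigma)$. For an input $(\mathbf J,\mathbf B,\mathbf C)$ with $\mathbf J=(J_{ij}:1\le i<j\le m)$, $\mathbf B=(B_i)_{i\le m}$, $\mathbf C=(C_i)_{i\le m}$, define $$Z_m(\mathbf J,\mathbf B,\mathbf C;p)=\sum_{\boldsymbol\sigma\in\{-1,1\}^m}2^{Nf(m,\boldsymbol\sigma)}\Big(\prod_{i:\sigma_i=-1}B_i\Big)\Big(\prod_{i:\sigma_i=+1}C_i\Big)\Big(\prod_{i<j:\sigma_i\ne\sigma_j}J_{ij}\Big)\pmod p,$$ with powers of $2$ (possibly negative exponents) interpreted in $\mathbb{Z}_p$. *)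

theory Defs
  imports Main "HOL-Library.FuncSet" "HOL-Number_Theory.Cong"
begin

text \<open>Elements of Z_p are represented by integers; all results are reduced mod p.\<close>

definition inv2 :: "int \<Rightarrow> int" where
  "inv2 p = (THE g. 0 \<le> g \<and> g < p \<and> [2 * g = 1] (mod p))"

definition pow2 :: "int \<Rightarrow> int \<Rightarrow> int" where
  "pow2 p e = (if 0 \<le> e then (2 ^ nat e) mod p else (inv2 p ^ nat (- e)) mod p)"

definition spins :: "nat \<Rightarrow> (nat \<Rightarrow> int) set" where
  "spins m = PiE {1..m} (\<lambda>_. {-1, 1})"

definition Icount :: "nat \<Rightarrow> (nat \<Rightarrow> int) \<Rightarrow> nat" where
  "Icount m \<sigma> = card {(i, j). 1 \<le> i \<and> i < j \<and> j \<le> m \<and> \<sigma> i \<noteq> \<sigma> j}"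

definition fexp :: "nat \<Rightarrow> (nat \<Rightarrow> int) \<Rightarrow> int" where
  "fexp m \<sigma> = int (m * (m - 1) div 2) - int m - int (Icount m \<sigma>)"

definition Zpart :: "nat \<Rightarrow> (nat \<Rightarrow> nat \<Rightarrow> int) \<Rightarrow> (nat \<Rightarrow> int) \<Rightarrow> (nat \<Rightarrow> int)
    \<Rightarrow> int \<Rightarrow> nat \<Rightarrow> int" where
  "Zpart m J B C p N =
     (\<Sum>\<sigma>\<in>spins m. pow2 p (int N * fexp m \<sigma>)
        * (\<Prod>i\<in>{i\<in>{1..m}. \<sigma> i = -1}. B i)
        * (\<Prod>i\<in>{i\<in>{1..m}. \<sigma> i = 1}. C i)
        * (\<Prod>(i, j)\<in>{(i, j). 1 \<le> i \<and> i < j \<and> j \<le> m \<and> \<sigma> i \<noteq> \<sigma> j}. J i j)) mod p"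

end

theory Submission
  imports Defs
begin

text \<open>Split the sum over configurations according to the last spin \<open>\<sigma>\<^sub>n\<close>. If
  \<open>\<sigma>\<^sub>n = 1\<close>, the pairs \<open>(i, n)\<close> that become disagreeing are those with \<open>\<sigma>\<^sub>i = -1\<close>; each
  contributes a factor \<open>J\<^sub>i\<^sub>n\<close> and lowers the exponent \<open>f\<close> by one, so it can be absorbed
  into \<open>B\<^sub>i\<close> as \<open>2\<^sup>-\<^sup>N B\<^sub>i J\<^sub>i\<^sub>n\<close>, while \<open>m(m-1)/2 - m\<close> grows by \<open>n - 2\<close> from
  \<open>m = n - 1\<close> to \<open>m = n\<close>. The case
  \<open>\<sigma>\<^sub>n = -1\<close> reduces to this one by the symmetry \<open>\<sigma> \<mapsto> -\<sigma>\<close>, which exchanges \<open>B\<close> and \<open>C\<close>.\<close>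

lemma inv2_eq:
  fixes p :: int
  assumes "odd p" "1 < p"
  shows "inv2 p = (p + 1) div 2"
  unfolding inv2_def
proof (rule the_equality)
  have two_half: "2 * ((p + 1) div 2) = p + 1"
    using assms(1) by presburger
  then show "0 \<le> (p + 1) div 2 \<and> (p + 1) div 2 < p \<and> [2 * ((p + 1) div 2) = 1] (mod p)"
    using assms(2) by (auto simp: cong_def)
  fix g
  assume g: "0 \<le> g \<and> g < p \<and> [2 * g = 1] (mod p)"
  then have "[2 * g = 2 * ((p + 1) div 2)] (mod p)"
    unfolding two_half by (auto simp: cong_def)
  then have "[g = (p + 1) div 2] (mod p)"
    using assms(1) by (metis coprime_left_2_iff_odd cong_mult_lcancel)
  then show "g = (p + 1) div 2"
    using g assms(2) by (intro cong_less_imp_eq_int) auto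
qed

lemma two_inv2_cong:
  fixes p :: int
  assumes "odd p" "0 < p"
  shows "[2 * inv2 p = 1] (mod p)"
proof (cases "p = 1")
  case False
  with assms have "inv2 p = (p + 1) div 2"
    by (simp add: inv2_eq)
  with assms(1) have "2 * inv2 p = p + 1"
    by presburger
  then show ?thesis
    by (simp add: cong_def)
qed simp

lemma pow2_shift_cong:
  fixes p e :: int
  assumes "odd p" "0 < p" "0 \<le> e + int k"
  shows "[pow2 p e = 2 ^ nat (e + int k) * inv2 p ^ k] (mod p)"
proof -
  have unit: "[(2 * inv2 p) ^ l = 1] (mod p)" for l
    using cong_pow[OF two_inv2_cong[OF assms(1,2)]] by simp
  show ?thesis
  proof (cases "0 \<le> e")
    case True
    have "2 ^ nat (e + int k) * inv2 p ^ k = 2 ^ nat e * (2 * inv2 p) ^ k"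
      using True by (simp add: nat_add_distrib power_add power_mult_distrib)
    also have "[\<dots> = 2 ^ nat e] (mod p)"
      using cong_scalar_left[OF unit] by simp
    finally show ?thesis
      using True by (simp add: pow2_def cong_def)
  next
    case False
    have "k = nat (e + int k) + nat (- e)"
      using False assms(3) by simp
    then have "inv2 p ^ k = inv2 p ^ nat (e + int k) * inv2 p ^ nat (- e)"
      by (metis power_add)
    then have "2 ^ nat (e + int k) * inv2 p ^ k = (2 * inv2 p) ^ nat (e + int k) * inv2 p ^ nat (- e)"
      by (simp add: power_mult_distrib mult.assoc)
    also have "[\<dots> = inv2 p ^ nat (- e)] (mod p)"
      using cong_scalar_right[OF unit] by simp
    finally show ?thesis
      using False by (simp add: pow2_def cong_def)
  qed
qed

lemma pow2_add_cong:
  fixes p a b :: int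
  assumes "odd p" "0 < p"
  shows "[pow2 p (a + b) = pow2 p a * pow2 p b] (mod p)"
proof -
  define k l where "k = nat (- a)" and "l = nat (- b)"
  have "[pow2 p (a + b) = 2 ^ nat (a + b + int (k + l)) * inv2 p ^ (k + l)] (mod p)"
    using assms by (intro pow2_shift_cong) (auto simp: k_def l_def)
  also have "2 ^ nat (a + b + int (k + l)) * inv2 p ^ (k + l)
      = (2 ^ nat (a + int k) * inv2 p ^ k) * (2 ^ nat (b + int l) * inv2 p ^ l)"
    by (simp add: k_def l_def nat_add_distrib power_add algebra_simps)
  also have "[\<dots> = pow2 p a * pow2 p b] (mod p)"
    using assms by (intro cong_mult cong_sym[OF pow2_shift_cong]) (auto simp: k_def l_def)
  finally show ?thesis .
qed

lemma pow2_mult_cong: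
  fixes p e :: int
  assumes "odd p" "0 < p"
  shows "[pow2 p (int k * e) = pow2 p e ^ k] (mod p)"
proof (induction k)
  case 0
  show ?case
    using assms(2) by (simp add: pow2_def cong_def)
next
  case (Suc k)
  have "[pow2 p (int (Suc k) * e) = pow2 p (int k * e) * pow2 p e] (mod p)"
    using pow2_add_cong[OF assms, of "int k * e" e] by (simp add: algebra_simps)
  also have "[pow2 p (int k * e) * pow2 p e = pow2 p e ^ k * pow2 p e] (mod p)"
    using Suc by (rule cong_mult) simp
  finally show ?case
    by (simp add: mult.commute)
qed

definition disagree_pairs :: "nat \<Rightarrow> (nat \<Rightarrow> int) \<Rightarrow> (nat \<times> nat) set" where
  "disagree_pairs m \<sigma> = {(i, j). 1 \<le> i \<and> i < j \<and> j \<le> m \<and> \<sigma> i \<noteq> \<sigma> j}"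

definition Zterm :: "nat \<Rightarrow> (nat \<Rightarrow> nat \<Rightarrow> int) \<Rightarrow> (nat \<Rightarrow> int) \<Rightarrow> (nat \<Rightarrow> int)
    \<Rightarrow> int \<Rightarrow> nat \<Rightarrow> (nat \<Rightarrow> int) \<Rightarrow> int" where
  "Zterm m J B C p N \<sigma> = pow2 p (int N * fexp m \<sigma>)
     * (\<Prod>i\<in>{i\<in>{1..m}. \<sigma> i = -1}. B i)
     * (\<Prod>i\<in>{i\<in>{1..m}. \<sigma> i = 1}. C i)
     * (\<Prod>(i, j)\<in>disagree_pairs m \<sigma>. J i j)"

lemma Zpart_eq_sum_Zterm: "Zpart m J B C p N = (\<Sum>\<sigma>\<in>spins m. Zterm m J B C p N \<sigma>) mod p"
  unfolding Zpart_def Zterm_def disagree_pairs_def ..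

lemma Icount_eq_card_disagree_pairs: "Icount m \<sigma> = card (disagree_pairs m \<sigma>)"
  unfolding Icount_def disagree_pairs_def ..

lemma finite_disagree_pairs [simp]: "finite (disagree_pairs m \<sigma>)"
  by (rule finite_subset[of _ "{1..m} \<times> {1..m}"]) (auto simp: disagree_pairs_def)

lemma sum_spins_Suc:
  "(\<Sum>\<sigma>\<in>spins (Suc m). f \<sigma>) = (\<Sum>\<sigma>\<in>spins m. f (\<sigma>(Suc m := 1)) + f (\<sigma>(Suc m := -1)))"
proof -
  have Suc_notin: "Suc m \<notin> {1..m}"
    by simp
  have atLeastAtMost_Suc: "{1..Suc m} = insert (Suc m) {1..m}"
    by auto
  have "spins (Suc m) = (\<lambda>(s, \<sigma>). \<sigma>(Suc m := s)) ` ({-1, 1} \<times> spins m)"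
    unfolding spins_def atLeastAtMost_Suc PiE_insert_eq
    by simp
  then have "(\<Sum>\<sigma>\<in>spins (Suc m). f \<sigma>) = (\<Sum>(s, \<sigma>)\<in>{-1, 1} \<times> spins m. f (\<sigma>(Suc m := s)))"
    using inj_combinator[OF Suc_notin, of "\<lambda>_. {-1, 1::int}"]
    by (simp add: sum.reindex spins_def case_prod_unfold)
  also have "\<dots> = (\<Sum>s\<in>{-1, 1}. \<Sum>\<sigma>\<in>spins m. f (\<sigma>(Suc m := s)))"
    by (simp add: sum.cartesian_product)
  finally show ?thesis
    by (simp add: sum.distrib add.commute)
qed

lemma disagree_pairs_Suc:
  "disagree_pairs (Suc m) (\<sigma>(Suc m := s))
     = disagree_pairs m \<sigma> \<union> (\<lambda>i. (i, Suc m)) ` {i\<in>{1..m}. \<sigma> i \<noteq> s}"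
  by (auto simp: disagree_pairs_def image_iff)

lemma disagree_pairs_Suc_disjoint:
  "disagree_pairs m \<sigma> \<inter> (\<lambda>i. (i, Suc m)) ` A = {}"
  by (auto simp: disagree_pairs_def)

lemma fexp_Suc:
  "fexp (Suc m) (\<sigma>(Suc m := s))
     = fexp m \<sigma> + (int m - 1) - int (card {i\<in>{1..m}. \<sigma> i \<noteq> s})"
proof -
  have "Icount (Suc m) (\<sigma>(Suc m := s)) = Icount m \<sigma> + card {i\<in>{1..m}. \<sigma> i \<noteq> s}"
    unfolding Icount_eq_card_disagree_pairs disagree_pairs_Suc
    by (simp add: card_Un_disjoint disagree_pairs_Suc_disjoint card_image inj_on_def)
  moreover have "Suc m * (Suc m - 1) div 2 = m * (m - 1) div 2 + m"
    by (cases m) (simp_all add: algebra_simps)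
  ultimately show ?thesis
    unfolding fexp_def by simp
qed

lemma Zterm_flip: "Zterm m J B C p N \<sigma> = Zterm m J C B p N (\<lambda>i. - \<sigma> i)"
proof -
  have "fexp m (\<lambda>i. - \<sigma> i) = fexp m \<sigma>" "disagree_pairs m (\<lambda>i. - \<sigma> i) = disagree_pairs m \<sigma>"
    by (simp_all add: fexp_def Icount_def disagree_pairs_def)
  moreover have "{i\<in>{1..m}. - \<sigma> i = s} = {i\<in>{1..m}. \<sigma> i = - s}" for s
    by auto
  ultimately show ?thesis
    unfolding Zterm_def by (simp add: algebra_simps)
qed

lemma prod_disagree_pairs_Suc:
  "(\<Prod>(i, j)\<in>disagree_pairs (Suc m) (\<sigma>(Suc m := s)). J i j)
     = (\<Prod>(i, j)\<in>disagree_pairs m \<sigma>. J i j) * (\<Prod>i\<in>{i\<in>{1..m}. \<sigma> i \<noteq> s}. J i (Suc m))"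
  unfolding disagree_pairs_Suc
  by (simp add: prod.union_disjoint disagree_pairs_Suc_disjoint prod.reindex inj_on_def)

lemma pow2_fexp_Suc_cong:
  fixes p :: int
  assumes "odd p" "0 < p"
  shows "[pow2 p (int N * fexp (Suc m) (\<sigma>(Suc m := s)))
    = pow2 p ((int (Suc m) - 2) * int N) * pow2 p (- int N) ^ card {i\<in>{1..m}. \<sigma> i \<noteq> s}
        * pow2 p (int N * fexp m \<sigma>)] (mod p)"
proof -
  define Q K F where "Q = (int (Suc m) - 2) * int N"
    and "K = int (card {i\<in>{1..m}. \<sigma> i \<noteq> s}) * (- int N)" and "F = int N * fexp m \<sigma>"
  have "int N * fexp (Suc m) (\<sigma>(Suc m := s)) = Q + (K + F)"
    unfolding fexp_Suc Q_def K_def F_def by (simp add: algebra_simps)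
  also have "[pow2 p (Q + (K + F)) = pow2 p Q * pow2 p (K + F)] (mod p)"
    by (rule pow2_add_cong[OF assms])
  also have "[pow2 p Q * pow2 p (K + F) = pow2 p Q * (pow2 p K * pow2 p F)] (mod p)"
    by (rule cong_mult[OF cong_refl pow2_add_cong[OF assms]])
  also have "[pow2 p Q * (pow2 p K * pow2 p F)
      = pow2 p Q * (pow2 p (- int N) ^ card {i\<in>{1..m}. \<sigma> i \<noteq> s} * pow2 p F)] (mod p)"
    unfolding K_def by (rule cong_mult[OF cong_refl cong_mult[OF pow2_mult_cong[OF assms] cong_refl]])
  finally show ?thesis
    unfolding Q_def F_def by (simp add: mult.assoc)
qed

lemma Zterm_Suc_plus:
  fixes p :: int
  assumes "odd p" "0 < p" "\<sigma> ` {1..m} \<subseteq> {-1, 1}"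
  shows "[Zterm (Suc m) J B C p N (\<sigma>(Suc m := 1)) =
    C (Suc m) * pow2 p ((int (Suc m) - 2) * int N)
      * Zterm m J (\<lambda>i. pow2 p (- int N) * B i * J i (Suc m)) C p N \<sigma>] (mod p)"
proof -
  define D where "D = {i\<in>{1..m}. \<sigma> i = -1}"
  define P Q where "P = pow2 p (- int N)" and "Q = pow2 p ((int (Suc m) - 2) * int N)"
  define R where "R = C (Suc m) * (\<Prod>i\<in>D. B i * J i (Suc m))
    * (\<Prod>i\<in>{i\<in>{1..m}. \<sigma> i = 1}. C i) * (\<Prod>(i, j)\<in>disagree_pairs m \<sigma>. J i j)"
  have D_eq: "{i\<in>{1..m}. \<sigma> i \<noteq> 1} = D"
    using assms(3) by (auto simp: D_def image_subset_iff)
  have "{i\<in>{1..Suc m}. (\<sigma>(Suc m := 1)) i = -1} = D"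
    "{i\<in>{1..Suc m}. (\<sigma>(Suc m := 1)) i = 1} = insert (Suc m) {i\<in>{1..m}. \<sigma> i = 1}"
    by (auto simp: D_def)
  then have "Zterm (Suc m) J B C p N (\<sigma>(Suc m := 1)) = pow2 p (int N * fexp (Suc m) (\<sigma>(Suc m := 1))) * R"
    unfolding Zterm_def prod_disagree_pairs_Suc D_eq R_def by (simp add: prod.distrib algebra_simps)
  also have "[\<dots> = Q * P ^ card D * pow2 p (int N * fexp m \<sigma>) * R] (mod p)"
    using pow2_fexp_Suc_cong[OF assms(1,2), of N m \<sigma> 1]
    unfolding D_eq P_def Q_def by (rule cong_mult) simp
  also have "Q * P ^ card D * pow2 p (int N * fexp m \<sigma>) * R
      = C (Suc m) * Q * Zterm m J (\<lambda>i. P * B i * J i (Suc m)) C p N \<sigma>"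
    unfolding Zterm_def R_def D_def by (simp add: prod.distrib algebra_simps)
  finally show ?thesis
    unfolding P_def Q_def .
qed

lemma Zterm_Suc_minus:
  fixes p :: int
  assumes "odd p" "0 < p" "\<sigma> ` {1..m} \<subseteq> {-1, 1}"
  shows "[Zterm (Suc m) J B C p N (\<sigma>(Suc m := -1)) =
    B (Suc m) * pow2 p ((int (Suc m) - 2) * int N)
      * Zterm m J B (\<lambda>i. pow2 p (- int N) * C i * J i (Suc m)) p N \<sigma>] (mod p)"
proof -
  have "(\<lambda>i. - \<sigma> i) ` {1..m} \<subseteq> {-1, 1}"
    using assms(3) by auto
  moreover have "(\<lambda>i. - (\<sigma>(Suc m := -1)) i) = (\<lambda>i. - \<sigma> i)(Suc m := 1)"
    by auto
  ultimately show ?thesis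
    using Zterm_Suc_plus[OF assms(1,2), of "\<lambda>i. - \<sigma> i" m J C B N]
    unfolding Zterm_flip[of "Suc m" J B C p N] Zterm_flip[of m J B _ p N \<sigma>] by simp
qed

lemma spins_range: "\<sigma> \<in> spins m \<Longrightarrow> \<sigma> ` {1..m} \<subseteq> {-1, 1}"
  by (auto simp: spins_def)

lemma sum_Zterm_Suc_cong:
  fixes p :: int
  assumes "odd p" "0 < p"
  shows "[(\<Sum>\<sigma>\<in>spins (Suc m). Zterm (Suc m) J B C p N \<sigma>) =
    C (Suc m) * pow2 p ((int (Suc m) - 2) * int N)
      * (\<Sum>\<sigma>\<in>spins m. Zterm m J (\<lambda>i. pow2 p (- int N) * B i * J i (Suc m)) C p N \<sigma>)
    + B (Suc m) * pow2 p ((int (Suc m) - 2) * int N)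
      * (\<Sum>\<sigma>\<in>spins m. Zterm m J B (\<lambda>i. pow2 p (- int N) * C i * J i (Suc m)) p N \<sigma>)] (mod p)"
  unfolding sum_spins_Suc sum_distrib_left sum.distrib[symmetric]
  by (intro cong_sum cong_add Zterm_Suc_plus[OF assms] Zterm_Suc_minus[OF assms] spins_range)

theorem lemma1:
  fixes p :: int and n N :: nat
    and J :: "nat \<Rightarrow> nat \<Rightarrow> int" and B C :: "nat \<Rightarrow> int"
  assumes "prime p" and "odd p" and "n \<ge> 2" and "N > 0"
  shows "Zpart n J B C p N =
    (C n * pow2 p ((int n - 2) * int N)
       * Zpart (n - 1) (\<lambda>i j. J i j) (\<lambda>i. pow2 p (- int N) * B i * J i n) (\<lambda>i. C i) p N
     + B n * pow2 p ((int n - 2) * int N)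
       * Zpart (n - 1) (\<lambda>i j. J i j) (\<lambda>i. B i) (\<lambda>i. pow2 p (- int N) * C i * J i n) p N) mod p"
proof -
  obtain m where n: "n = Suc m"
    using assms(3) by (cases n) auto
  have "0 < p"
    using assms(1) by (simp add: prime_gt_0_int)
  with assms(2) have "[(\<Sum>\<sigma>\<in>spins n. Zterm n J B C p N \<sigma>) =
    C n * pow2 p ((int n - 2) * int N)
      * ((\<Sum>\<sigma>\<in>spins m. Zterm m J (\<lambda>i. pow2 p (- int N) * B i * J i n) C p N \<sigma>) mod p)
    + B n * pow2 p ((int n - 2) * int N)
      * ((\<Sum>\<sigma>\<in>spins m. Zterm m J B (\<lambda>i. pow2 p (- int N) * C i * J i n) p N \<sigma>) mod p)] (mod p)"
    unfolding n by (intro cong_trans[OF sum_Zterm_Suc_cong] cong_add cong_mult cong_refl)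
      (simp_all add: cong_def)
  then show ?thesis
    unfolding Zpart_eq_sum_Zterm cong_def by (simp add: n)
qed

end
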